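(* Let $d$ be a compatible metric on the Cantor space $\mathbf{C}$, let $h:\mathbf{C}\to\mathbf{C}$ be an isometry of $(\mathbf{C},d)$ and let $\varepsilon>0$. Then there is a finite partition $\mathcal{V}$ of $\mathbf{C}$ into clopen sets, each of diameter less than $\varepsilon$, such that the digraph $(\mathcal{V},h)$ is a disjoint union of directed cycles.
   Context: For a finite clopen partition $\mathcal{V}$ of $\mathbf{C}$ and a map $h$, the digraph $(\mathcal{V},h)$ has vertex set $\mathcal{V}$ and a directed edge from $a$ to $b$ if and only if $h(a)\cap b\ne\emptyset$. *)

theory Defs
  imports "HOL-Analysis.Analysis"
begin

type_synonym cantor = "nat \<Rightarrow> bool"

definition cantor_top :: "cantor topology" where
  "cantor_top = product_topology (\<lambda>_. discrete_topology (UNIV :: bool set)) UNIV"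

definition compatible_metric :: "(cantor \<Rightarrow> cantor \<Rightarrow> real) \<Rightarrow> bool" where
  "compatible_metric d \<longleftrightarrow> Metric_space UNIV d \<and> Metric_space.mtopology UNIV d = cantor_top"

definition diam_d :: "('a \<Rightarrow> 'a \<Rightarrow> real) \<Rightarrow> 'a set \<Rightarrow> real" where
  "diam_d d A = (SUP p\<in>A \<times> A. d (fst p) (snd p))"

definition dg_edge :: "('a \<Rightarrow> 'a) \<Rightarrow> 'a set \<Rightarrow> 'a set \<Rightarrow> bool" where
  "dg_edge h a b \<longleftrightarrow> h ` a \<inter> b \<noteq> {}"

text \<open>A finite digraph on vertex set V with edge relation E is a disjoint union of
  directed cycles (loops count as cycles of length one) iff every vertex has exactly
  one out-neighbour and exactly one in-neighbour.\<close>
definition union_of_dicycles :: "'v set \<Rightarrow> ('v \<Rightarrow> 'v \<Rightarrow> bool) \<Rightarrow> bool" where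
  "union_of_dicycles V E \<longleftrightarrow>
     finite V \<and> (\<forall>a\<in>V. \<exists>!b. b \<in> V \<and> E a b) \<and> (\<forall>b\<in>V. \<exists>!a. a \<in> V \<and> E a b)"

end

theory Submission
  imports Defs
begin

(* Call x and y delta-chained if they are joined by finitely many steps of d-length < delta.
   The classes of this equivalence contain delta-balls, so they are clopen, and by compactness
   there are finitely many of them. An isometry of a compact metric space is onto, so it maps
   delta-chains to delta-chains in both directions and hence permutes the classes; the digraph
   of a permutation of a partition is a disjoint union of cycles.
   Smallness of the classes is where zero-dimensionality enters: by compactness there is n such
   that all cylinders of length n have small diameter, and by the Lebesgue number lemma there is
   delta such that delta-close points lie in the same n-cylinder; then every delta-class lies in
   one n-cylinder. *)

section \<open>Chain classes of a metric space\<close>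

definition chain_rel :: "('a \<Rightarrow> 'a \<Rightarrow> real) \<Rightarrow> real \<Rightarrow> ('a \<times> 'a) set" where
  "chain_rel d \<delta> = {(x, y). d x y < \<delta>}\<^sup>*"

lemma equiv_chain_rel:
  assumes "Metric_space UNIV d"
  shows "equiv UNIV (chain_rel d \<delta>)"
proof -
  interpret M: Metric_space UNIV d by fact
  have "sym {(x, y). d x y < \<delta>}"
    by (auto intro: symI simp: M.commute)
  then show ?thesis
    unfolding chain_rel_def equiv_def by (simp add: refl_rtrancl sym_rtrancl trans_rtrancl)
qed

lemma mball_subset_chain_class:
  assumes "Metric_space UNIV d" and "(x, y) \<in> chain_rel d \<delta>"
  shows "Metric_space.mball UNIV d y \<delta> \<subseteq> chain_rel d \<delta> `` {x}"
proof -
  interpret M: Metric_space UNIV d by fact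
  show ?thesis
    using assms(2) unfolding chain_rel_def by (auto intro: rtrancl_into_rtrancl)
qed

lemma openin_chain_class:
  assumes "Metric_space UNIV d" and "\<delta> > 0"
  shows "openin (Metric_space.mtopology UNIV d) (chain_rel d \<delta> `` {x})"
proof -
  interpret M: Metric_space UNIV d by fact
  show ?thesis
    unfolding M.openin_mtopology using assms(2) mball_subset_chain_class[OF assms(1)] by blast
qed

lemma closedin_chain_class:
  assumes "Metric_space UNIV d" and "\<delta> > 0"
  shows "closedin (Metric_space.mtopology UNIV d) (chain_rel d \<delta> `` {x})"
proof -
  interpret M: Metric_space UNIV d by fact
  have "M.mball w \<delta> \<subseteq> UNIV - chain_rel d \<delta> `` {x}" if "w \<notin> chain_rel d \<delta> `` {x}" for w
  proof
    fix v assume v: "v \<in> M.mball w \<delta>"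
    have "w \<in> M.mball v \<delta>" using v by (simp add: M.commute)
    have "v \<notin> chain_rel d \<delta> `` {x}"
    proof
      assume "v \<in> chain_rel d \<delta> `` {x}"
      then have "M.mball v \<delta> \<subseteq> chain_rel d \<delta> `` {x}"
        using mball_subset_chain_class[OF assms(1)] by blast
      with \<open>w \<in> M.mball v \<delta>\<close> that show False by blast
    qed
    then show "v \<in> UNIV - chain_rel d \<delta> `` {x}" by simp
  qed
  then have "openin M.mtopology (UNIV - chain_rel d \<delta> `` {x})"
    unfolding M.openin_mtopology using assms(2) by blast
  then show ?thesis by (simp add: closedin_def)
qed

lemma finite_quotient_chain_rel:
  assumes "Metric_space UNIV d" and "compact_space (Metric_space.mtopology UNIV d)" and "\<delta> > 0"
  shows "finite (UNIV // chain_rel d \<delta>)"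
proof -
  interpret M: Metric_space UNIV d by fact
  have "M.mtotally_bounded UNIV"
    using assms(2) by (simp add: M.compactin_imp_mtotally_bounded compact_space_def)
  then obtain K where K: "finite K" "UNIV \<subseteq> (\<Union>c\<in>K. M.mball c \<delta>)"
    using assms(3) unfolding M.mtotally_bounded_def by blast
  have "UNIV // chain_rel d \<delta> \<subseteq> (\<lambda>c. chain_rel d \<delta> `` {c}) ` K"
  proof
    fix A assume "A \<in> UNIV // chain_rel d \<delta>"
    then obtain x where x: "A = chain_rel d \<delta> `` {x}" by (rule quotientE)
    obtain c where "c \<in> K" "x \<in> M.mball c \<delta>" using K(2) by blast
    then have "(c, x) \<in> chain_rel d \<delta>" by (auto simp: chain_rel_def)
    then have "A = chain_rel d \<delta> `` {c}"
      using x equiv_class_eq[OF equiv_chain_rel[OF assms(1)]] by metis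
    then show "A \<in> (\<lambda>c. chain_rel d \<delta> `` {c}) ` K" using \<open>c \<in> K\<close> by blast
  qed
  then show ?thesis using K(1) finite_surj by blast
qed

section \<open>Isometries of compact metric spaces\<close>

lemma isometry_chain_rel:
  assumes "\<forall>x y. d (f x) (f y) = d x y" and "(x, y) \<in> chain_rel d \<delta>"
  shows "(f x, f y) \<in> chain_rel d \<delta>"
  using assms(2) unfolding chain_rel_def
  by (induction rule: rtrancl_induct) (auto simp: assms(1) intro: rtrancl_into_rtrancl)

lemma isometry_image_chain_class:
  assumes iso: "\<forall>x y. d (f x) (f y) = d x y" and "bij f"
  shows "f ` (chain_rel d \<delta> `` {x}) = chain_rel d \<delta> `` {f x}"
proof
  show "f ` (chain_rel d \<delta> `` {x}) \<subseteq> chain_rel d \<delta> `` {f x}"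
    using isometry_chain_rel[OF iso] by blast
  have inv_iso: "\<forall>x y. d (inv f x) (inv f y) = d x y"
    using iso surj_f_inv_f[OF bij_is_surj[OF \<open>bij f\<close>]] by metis
  show "chain_rel d \<delta> `` {f x} \<subseteq> f ` (chain_rel d \<delta> `` {x})"
  proof
    fix y assume "y \<in> chain_rel d \<delta> `` {f x}"
    then have "(inv f (f x), inv f y) \<in> chain_rel d \<delta>"
      using isometry_chain_rel[OF inv_iso] by blast
    then show "y \<in> f ` (chain_rel d \<delta> `` {x})"
      using \<open>bij f\<close> by (auto simp: bij_is_inj surj_f_inv_f[OF bij_is_surj] intro!: image_eqI[of y f "inv f y"])
  qed
qed

lemma isometry_returns:
  assumes "Metric_space UNIV d" and "compact_space (Metric_space.mtopology UNIV d)"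
    and iso: "\<forall>x y. d (f x) (f y) = d x y" and "r > 0"
  shows "\<exists>k. d y ((f ^^ Suc k) y) < r"
proof -
  interpret M: Metric_space UNIV d by fact
  have "M.mtotally_bounded UNIV"
    using assms(2) M.compactin_imp_mtotally_bounded by (simp add: compact_space_def)
  then obtain s where s: "strict_mono s" "M.MCauchy ((\<lambda>n. (f ^^ n) y) \<circ> s)"
    unfolding M.mtotally_bounded_sequentially by auto
  then obtain N where "\<forall>n n'. N \<le> n \<longrightarrow> N \<le> n' \<longrightarrow> d ((f ^^ s n) y) ((f ^^ s n') y) < r"
    using \<open>r > 0\<close> unfolding M.MCauchy_def by auto
  then have N: "d ((f ^^ s N) y) ((f ^^ s (Suc N)) y) < r"
    by simp
  obtain k where k: "s (Suc N) = s N + Suc k"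
    using strict_monoD[OF s(1), of N "Suc N"] less_iff_Suc_add by auto
  have iso_pow: "d ((f ^^ n) a) ((f ^^ n) b) = d a b" for n a b
    by (induction n) (simp_all add: iso)
  \<comment> \<open>two close points of the orbit, pulled back to \<open>y\<close> by the isometry \<open>f ^^ s N\<close>\<close>
  have "(f ^^ s (Suc N)) y = (f ^^ s N) ((f ^^ Suc k) y)"
    unfolding k funpow_add by simp
  then show ?thesis
    using N iso_pow[of "s N" y "(f ^^ Suc k) y"] by auto
qed

lemma isometry_inj:
  assumes "Metric_space UNIV d" and iso: "\<forall>x y. d (f x) (f y) = d x y"
  shows "inj f"
proof (rule injI)
  interpret M: Metric_space UNIV d by fact
  fix x y assume "f x = f y"
  have "d x y = d (f x) (f y)"
    using iso by simp
  also have "\<dots> = 0"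
    using \<open>f x = f y\<close> M.zero by simp
  finally show "x = y"
    using M.zero by simp
qed

lemma isometry_surj:
  assumes "Metric_space UNIV d" and "compact_space (Metric_space.mtopology UNIV d)"
    and iso: "\<forall>x y. d (f x) (f y) = d x y"
  shows "surj f"
proof -
  interpret M: Metric_space UNIV d by fact
  have "continuous_map M.mtopology M.mtopology f"
    unfolding M.metric_continuous_map[OF M.Metric_space_axioms] using iso by (metis subset_UNIV)
  then have "compactin M.mtopology (f ` UNIV)"
    using assms(2) unfolding compact_space_def by (intro image_compactin) simp_all
  then have "closedin M.mtopology (range f)"
    by (rule compactin_imp_closedin[OF M.Hausdorff_space_mtopology])
  moreover have "M.mtopology closure_of range f = UNIV"
  proof -
    have "\<exists>z \<in> range f. z \<in> M.mball y r" if "r > 0" for y r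
      using isometry_returns[OF assms that, of y] by auto
    then show ?thesis unfolding M.metric_closure_of by auto
  qed
  ultimately show ?thesis by (simp add: closure_of_closedin)
qed

lemma union_of_dicycles_image_partition:
  assumes "finite \<V>" and disj: "\<forall>A\<in>\<V>. \<forall>B\<in>\<V>. A \<noteq> B \<longrightarrow> A \<inter> B = {}" and "{} \<notin> \<V>"
    and "inj h" and img: "\<forall>A\<in>\<V>. h ` A \<in> \<V>"
  shows "union_of_dicycles \<V> (dg_edge h)"
proof -
  have edge_iff: "dg_edge h A B \<longleftrightarrow> B = h ` A" if "A \<in> \<V>" "B \<in> \<V>" for A B
  proof
    assume "dg_edge h A B"
    moreover have "h ` A \<in> \<V>"
      using img that(1) by blast
    ultimately show "B = h ` A"
      using disj that(2) unfolding dg_edge_def by metis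
  next
    assume "B = h ` A"
    then show "dg_edge h A B"
      using \<open>{} \<notin> \<V>\<close> that(2) unfolding dg_edge_def by auto
  qed
  have inj: "inj_on ((`) h) \<V>"
    using \<open>inj h\<close> by (simp add: inj_on_def inj_image_eq_iff)
  moreover have "(`) h ` \<V> \<subseteq> \<V>"
    using img by blast
  ultimately have surj: "(`) h ` \<V> = \<V>"
    using \<open>finite \<V>\<close> by (simp add: endo_inj_surj)
  show ?thesis
    unfolding union_of_dicycles_def
  proof (intro conjI ballI)
    fix A assume "A \<in> \<V>"
    then have "h ` A \<in> \<V>"
      using img by blast
    then show "\<exists>!B. B \<in> \<V> \<and> dg_edge h A B"
      using edge_iff[OF \<open>A \<in> \<V>\<close>] by (intro ex1I[of _ "h ` A"]) auto
  next
    fix B assume "B \<in> \<V>"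
    then obtain A where A: "A \<in> \<V>" "B = h ` A"
      using surj by blast
    have "A' = A" if "A' \<in> \<V>" "dg_edge h A' B" for A'
      using that edge_iff[OF that(1) \<open>B \<in> \<V>\<close>] A inj_onD[OF inj] by metis
    then show "\<exists>!A. A \<in> \<V> \<and> dg_edge h A B"
      using A edge_iff[OF A(1) \<open>B \<in> \<V>\<close>] by (intro ex1I[of _ A]) simp_all
  qed fact
qed

lemma union_of_dicycles_chain_classes:
  assumes metric: "Metric_space UNIV d" and compact: "compact_space (Metric_space.mtopology UNIV d)"
    and iso: "\<forall>x y. d (f x) (f y) = d x y" and "\<delta> > 0"
  shows "union_of_dicycles (UNIV // chain_rel d \<delta>) (dg_edge f)"
proof (rule union_of_dicycles_image_partition)
  have equiv: "equiv UNIV (chain_rel d \<delta>)"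
    by (rule equiv_chain_rel[OF metric])
  show "finite (UNIV // chain_rel d \<delta>)"
    by (rule finite_quotient_chain_rel[OF metric compact \<open>\<delta> > 0\<close>])
  show "\<forall>A\<in>UNIV // chain_rel d \<delta>. \<forall>B\<in>UNIV // chain_rel d \<delta>. A \<noteq> B \<longrightarrow> A \<inter> B = {}"
    using quotient_disj[OF equiv] by blast
  show "{} \<notin> UNIV // chain_rel d \<delta>"
    using in_quotient_imp_non_empty[OF equiv] by blast
  show "inj f"
    by (rule isometry_inj[OF metric iso])
  then have "bij f"
    using isometry_surj[OF metric compact iso] by (rule bijI)
  show "\<forall>A\<in>UNIV // chain_rel d \<delta>. f ` A \<in> UNIV // chain_rel d \<delta>"
  proof
    fix A assume "A \<in> UNIV // chain_rel d \<delta>"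
    then obtain x where "A = chain_rel d \<delta> `` {x}"
      by (rule quotientE)
    then have "f ` A = chain_rel d \<delta> `` {f x}"
      using isometry_image_chain_class[OF iso \<open>bij f\<close>] by simp
    then show "f ` A \<in> UNIV // chain_rel d \<delta>"
      by (simp add: quotientI)
  qed
qed

section \<open>Cylinders of the Cantor space\<close>

lemma topspace_cantor_top [simp]: "topspace cantor_top = UNIV"
  by (simp add: cantor_top_def)

lemma compact_space_cantor_top: "compact_space cantor_top"
  unfolding cantor_top_def
  by (simp add: compact_space_product_topology compact_space_discrete_topology)

definition cylinder :: "cantor \<Rightarrow> nat \<Rightarrow> cantor set" where
  "cylinder x n = {y. \<forall>i<n. y i = x i}"

lemma cylinder_self [simp]: "x \<in> cylinder x n"
  by (simp add: cylinder_def)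

lemma cylinder_eq: "y \<in> cylinder x n \<Longrightarrow> cylinder y n = cylinder x n"
  by (auto simp: cylinder_def)

lemma openin_cylinder: "openin cantor_top (cylinder x n)"
proof -
  have coord: "openin cantor_top {y. y i = x i}" for i
  proof -
    have "continuous_map cantor_top (discrete_topology UNIV) (\<lambda>y. y i)"
      unfolding cantor_top_def by (rule continuous_map_product_projection) simp
    from openin_continuous_map_preimage[OF this, of "{x i}"] show ?thesis by simp
  qed
  show ?thesis
  proof (induction n)
    case 0
    show ?case using openin_topspace[of cantor_top] by (simp add: cylinder_def)
  next
    case (Suc n)
    have "cylinder x (Suc n) = cylinder x n \<inter> {y. y n = x n}"
      by (auto simp: cylinder_def less_Suc_eq)
    then show ?case using Suc coord by (simp add: openin_Int)
  qed
qed

lemma cylinder_subset_openin: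
  assumes "openin cantor_top U" and "x \<in> U"
  shows "\<exists>n. cylinder x n \<subseteq> U"
proof -
  obtain V where V: "finite {i. V i \<noteq> UNIV}" "x \<in> Pi\<^sub>E UNIV V" "Pi\<^sub>E UNIV V \<subseteq> U"
    using assms unfolding cantor_top_def openin_product_topology_alt by auto
  then obtain n where n: "\<forall>i\<ge>n. V i = UNIV"
    by (metis (mono_tags, lifting) finite_nat_set_iff_bounded mem_Collect_eq not_le)
  have "y i \<in> V i" if "y \<in> cylinder x n" for y i
    using V(2) n that by (cases "i < n") (auto simp: cylinder_def PiE_UNIV_domain)
  then have "cylinder x n \<subseteq> Pi\<^sub>E UNIV V"
    by (auto simp: PiE_UNIV_domain)
  then show ?thesis using V(3) by blast
qed

lemma compatible_metric_cylinder_small: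
  assumes "compatible_metric d" and "\<epsilon> > 0"
  shows "\<exists>n. \<forall>x. \<forall>y\<in>cylinder x n. d x y < \<epsilon>"
proof -
  interpret M: Metric_space UNIV d
    using assms(1) by (simp add: compatible_metric_def)
  have top: "M.mtopology = cantor_top"
    using assms(1) by (simp add: compatible_metric_def)
  have "\<exists>m. cylinder x m \<subseteq> M.mball x (\<epsilon>/2)" for x
  proof (rule cylinder_subset_openin)
    show "openin cantor_top (M.mball x (\<epsilon>/2))"
      using M.openin_mball[of x "\<epsilon>/2"] by (simp only: top)
    show "x \<in> M.mball x (\<epsilon>/2)"
      using assms(2) by simp
  qed
  then obtain m where m: "\<And>x. cylinder x (m x) \<subseteq> M.mball x (\<epsilon>/2)"
    by metis
  have "compactin cantor_top UNIV"
    using compact_space_cantor_top by (simp add: compact_space_def)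
  moreover have "openin cantor_top U" if "U \<in> range (\<lambda>x. cylinder x (m x))" for U
    using that openin_cylinder by auto
  moreover have "UNIV \<subseteq> \<Union> (range (\<lambda>x. cylinder x (m x)))"
    using cylinder_self by blast
  ultimately obtain \<F> where \<F>: "finite \<F>" "\<F> \<subseteq> range (\<lambda>x. cylinder x (m x))" "UNIV \<subseteq> \<Union>\<F>"
    using compactinD[of cantor_top UNIV "range (\<lambda>x. cylinder x (m x))"] by blast
  then obtain K where K: "finite K" "\<F> = (\<lambda>x. cylinder x (m x)) ` K"
    by (meson finite_subset_image)
  show ?thesis
  proof (intro exI allI ballI)
    fix x y assume y: "y \<in> cylinder x (Max (m ` K))"
    obtain c where c: "c \<in> K" "x \<in> cylinder c (m c)"
      using \<F>(3) K(2) by blast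
    have "m c \<le> Max (m ` K)"
      using K(1) c(1) by simp
    then have "y \<in> cylinder c (m c)"
      using y c(2) by (auto simp: cylinder_def)
    then have "d c x < \<epsilon>/2" "d c y < \<epsilon>/2"
      using m[of c] c(2) by auto
    then show "d x y < \<epsilon>"
      using M.triangle[of x c y] M.commute[of x c] by simp
  qed
qed

lemma compatible_metric_close_imp_cylinder:
  assumes "compatible_metric d"
  shows "\<exists>\<delta>>0. \<forall>x y. d x y < \<delta> \<longrightarrow> y \<in> cylinder x n"
proof -
  interpret M: Metric_space UNIV d
    using assms by (simp add: compatible_metric_def)
  have top: "M.mtopology = cantor_top"
    using assms by (simp add: compatible_metric_def)
  have "compactin M.mtopology UNIV"
    using compact_space_cantor_top by (simp add: top compact_space_def)
  moreover have "UNIV \<subseteq> \<Union> (range (\<lambda>x. cylinder x n))"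
    using cylinder_self by blast
  moreover have "openin M.mtopology U" if "U \<in> range (\<lambda>x. cylinder x n)" for U
    using that openin_cylinder by (auto simp: top)
  ultimately obtain \<delta> where "\<delta> > 0" and \<delta>: "\<forall>x\<in>UNIV. \<exists>U \<in> range (\<lambda>x. cylinder x n). M.mball x \<delta> \<subseteq> U"
    using M.lebesgue_number by metis
  have "y \<in> cylinder x n" if "d x y < \<delta>" for x y
  proof -
    obtain c where c: "M.mball x \<delta> \<subseteq> cylinder c n"
      using \<delta> by blast
    moreover have "x \<in> M.mball x \<delta>" "y \<in> M.mball x \<delta>"
      using \<open>\<delta> > 0\<close> that by simp_all
    ultimately show ?thesis
      using cylinder_eq by blast
  qed
  then show ?thesis
    using \<open>\<delta> > 0\<close> by blast
qed

lemma chain_class_subset_cylinder: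
  assumes "\<forall>x y. d x y < \<delta> \<longrightarrow> y \<in> cylinder x n"
  shows "chain_rel d \<delta> `` {x} \<subseteq> cylinder x n"
proof
  fix y assume "y \<in> chain_rel d \<delta> `` {x}"
  then have "(x, y) \<in> {(x, y). d x y < \<delta>}\<^sup>*"
    by (simp add: chain_rel_def)
  then show "y \<in> cylinder x n"
  proof (induction rule: rtrancl_induct)
    case base
    then show ?case by (simp add: cylinder_def)
  next
    case (step y z)
    then show ?case using assms cylinder_eq by blast
  qed
qed

lemma diam_d_le:
  assumes "A \<noteq> {}" and "\<forall>x\<in>A. \<forall>y\<in>A. d x y \<le> c"
  shows "diam_d d A \<le> c"
  unfolding diam_d_def using assms by (intro cSUP_least) auto

lemma compatible_metric_small_chain_classes:
  assumes "compatible_metric d" and "\<epsilon> > 0"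
  shows "\<exists>\<delta>>0. \<forall>x. diam_d d (chain_rel d \<delta> `` {x}) < \<epsilon>"
proof -
  obtain n where small: "\<forall>x. \<forall>y\<in>cylinder x n. d x y < \<epsilon>/2"
    using compatible_metric_cylinder_small[OF assms(1), of "\<epsilon>/2"] assms(2) by auto
  obtain \<delta> where "\<delta> > 0" and close: "\<forall>x y. d x y < \<delta> \<longrightarrow> y \<in> cylinder x n"
    using compatible_metric_close_imp_cylinder[OF assms(1)] by blast
  have half: "diam_d d (chain_rel d \<delta> `` {x}) \<le> \<epsilon>/2" for x
  proof (rule diam_d_le)
    show "chain_rel d \<delta> `` {x} \<noteq> {}"
      by (auto simp: chain_rel_def)
    show "\<forall>y\<in>chain_rel d \<delta> `` {x}. \<forall>z\<in>chain_rel d \<delta> `` {x}. d y z \<le> \<epsilon>/2"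
    proof (intro ballI)
      fix y z assume "y \<in> chain_rel d \<delta> `` {x}" "z \<in> chain_rel d \<delta> `` {x}"
      then have "z \<in> cylinder y n"
        using chain_class_subset_cylinder[OF close, of x] cylinder_eq by blast
      then show "d y z \<le> \<epsilon>/2"
        using small by (simp add: less_imp_le)
    qed
  qed
  have "diam_d d (chain_rel d \<delta> `` {x}) < \<epsilon>" for x
    using half[of x] assms(2) by linarith
  then show ?thesis
    using \<open>\<delta> > 0\<close> by blast
qed

theorem proposition6p3:
  fixes d :: "cantor \<Rightarrow> cantor \<Rightarrow> real" and h :: "cantor \<Rightarrow> cantor" and \<epsilon> :: real
  assumes "compatible_metric d"
    and "\<forall>x y. d (h x) (h y) = d x y"
    and "\<epsilon> > 0"
  shows "\<exists>\<V> :: cantor set set.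
           finite \<V> \<and> \<Union>\<V> = UNIV \<and> {} \<notin> \<V> \<and>
           (\<forall>A\<in>\<V>. \<forall>B\<in>\<V>. A \<noteq> B \<longrightarrow> A \<inter> B = {}) \<and>
           (\<forall>A\<in>\<V>. closedin cantor_top A \<and> openin cantor_top A \<and> diam_d d A < \<epsilon>) \<and>
           union_of_dicycles \<V> (dg_edge h)"
proof -
  have metric: "Metric_space UNIV d" and top: "Metric_space.mtopology UNIV d = cantor_top"
    using assms(1) by (simp_all add: compatible_metric_def)
  have compact: "compact_space (Metric_space.mtopology UNIV d)"
    using compact_space_cantor_top by (simp add: top)
  obtain \<delta> where "\<delta> > 0" and small: "\<forall>x. diam_d d (chain_rel d \<delta> `` {x}) < \<epsilon>"
    using compatible_metric_small_chain_classes[OF assms(1,3)] by blast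
  let ?\<V> = "UNIV // chain_rel d \<delta>"
  have equiv: "equiv UNIV (chain_rel d \<delta>)"
    by (rule equiv_chain_rel[OF metric])
  have "\<forall>A\<in>?\<V>. closedin cantor_top A \<and> openin cantor_top A \<and> diam_d d A < \<epsilon>"
    using closedin_chain_class[OF metric \<open>\<delta> > 0\<close>] openin_chain_class[OF metric \<open>\<delta> > 0\<close>] small
    by (auto simp: top elim!: quotientE)
  moreover have "\<forall>A\<in>?\<V>. \<forall>B\<in>?\<V>. A \<noteq> B \<longrightarrow> A \<inter> B = {}" "{} \<notin> ?\<V>"
    using quotient_disj[OF equiv] in_quotient_imp_non_empty[OF equiv] by blast+
  ultimately show ?thesis
    using finite_quotient_chain_rel[OF metric compact \<open>\<delta> > 0\<close>] Union_quotient[OF equiv]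
      union_of_dicycles_chain_classes[OF metric compact assms(2) \<open>\<delta> > 0\<close>]
    by blast
qed

end
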